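(* Consider the contextual bandit setting below run for $T$ iterations with $N$ arms and $d$-dimensional contexts. Let $E_T$ be the event that the policy population reaches the $\delta$-target within $T$ iterations, with $\Pr(E_T)=1-\epsilon_{\delta,T}$. Suppose there is a contextual bandit algorithm and a constant $C>0$ such that for every $\eta_1\in(0,1)$, with probability at least $1-\eta_1$ its $T$-regret satisfies $R_T\le C\sqrt{Td\,\ln^3\!\big(NT\ln(T)/\eta_1\big)}$, and that this event is independent of $E_T$. Then for every $\eta$ with $\epsilon_{\delta,T}<\eta<1$, with probability at least $1-\eta$ the $\delta$-target is reached within $T$ iterations and $$R_T\le C\sqrt{Td\,\ln^3\!\Big(\frac{NT\ln(T)\,(1-\epsilon_{\delta,T})}{\eta-\epsilon_{\delta,T}}\Big)},$$ i.e. the regret of bandit selection is $O\Big(\sqrt{Td\ln^3\big(\frac{NT\ln(T)(1-\epsilon_{\delta,T})}{\eta-\epsilon_{\delta,T}}\big)}\Big)$ with probability $1-\eta$.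
   Context: Contextual bandit setting: there is a set $\mathcal{A}$ of $N$ arms (here, the $N$ policies of a diversity RL population; selecting an arm means choosing that policy to update). At each iteration $t=1,\dots,T$ one observes feature vectors $x_{t,a}\in\mathbb{R}^d$ with $\|x_{t,a}\|_2\le 1$ for each $a\in\mathcal{A}$, the algorithm chooses an arm $a_t$ and receives reward $r_{t,a_t}\in[0,1]$ (the change in population diversity caused by the update). Linear realizability: there is an unknown $\theta^*\in\mathbb{R}^d$ with $\|\theta^*\|_2\le1$ such that $\mathbb{E}[r_{t,a}\mid x_{t,a}]=x_{t,a}^T\theta^*$ for all $t,a$. The $T$-regret is $R_T=\mathbb{E}[\sum_{t=1}^T r_{t,a_t^*}]-\mathbb{E}[\sum_{t=1}^T r_{t,a_t}]$, where $a_t^*$ is the arm with maximal expected reward at iteration $t$. For a diversity matrix $U$ with $U_{ij}=Div(\pi^i,\pi^j)$ and a population-diversity function $f$, the population reaches the $\delta$-target when $f(U)>\delta$. The number $\epsilon_{\delta,T}$ satisfies $\epsilon_{\delta,T}\to0$ as $T\to\infty$, so $\eta-\epsilon_{\delta,T}\to\eta>0$. *)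

theory Defs
  imports "HOL-Probability.Probability"
begin

definition regret_bound :: "real \<Rightarrow> nat \<Rightarrow> nat \<Rightarrow> nat \<Rightarrow> real \<Rightarrow> real" where
  "regret_bound C T d N x =
     C * sqrt (real T * real d * (ln (real N * real T * ln (real T) / x)) ^ 3)"

text \<open>Event that the population reaches the delta-target within T iterations:
  U t w is the diversity matrix (U_ij = Div(pi^i, pi^j)) after iteration t on outcome w,
  f the population-diversity function.\<close>
definition reach_target ::
  "(nat \<Rightarrow> 'a \<Rightarrow> (nat \<Rightarrow> nat \<Rightarrow> real)) \<Rightarrow> ((nat \<Rightarrow> nat \<Rightarrow> real) \<Rightarrow> real) \<Rightarrow> real \<Rightarrow> nat \<Rightarrow> 'a set" where
  "reach_target U f \<delta> T = {w. \<exists>t\<in>{1..T}. f (U t w) > \<delta>}"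

end

theory Submission
  imports Defs
begin

text \<open>Running the regret bound at the
  confidence level \<open>\<eta>\<^sub>1 = (\<eta> - \<epsilon>) / (1 - \<epsilon>)\<close>, which lies in \<open>(0, 1)\<close> exactly when
  \<open>\<epsilon> < \<eta> < 1\<close>, independence gives probability at least
  \<open>(1 - \<eta>\<^sub>1) (1 - \<epsilon>) = 1 - \<eta>\<close> for both events together, and the logarithm in the
  bound at level \<open>\<eta>\<^sub>1\<close> is the one claimed.\<close>

lemma (in prob_space) indep_event_prob_Int:
  assumes "indep_event A B"
  shows "prob (A \<inter> B) = prob A * prob B"
proof -
  have "prob (\<Inter>i\<in>UNIV. case_bool A B i) = (\<Prod>i\<in>UNIV. prob (case_bool A B i))"
    using assms by (auto simp: indep_event_def indep_events_def)
  then show ?thesis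
    by (simp add: UNIV_bool Int_commute)
qed

lemma (in prob_space) indep_event_prob_Int_ge:
  assumes indep: "indep_event A E"
    and prob_E: "prob E = 1 - \<epsilon>"
    and "\<epsilon> < 1"
    and prob_A: "prob A \<ge> 1 - (\<eta> - \<epsilon>) / (1 - \<epsilon>)"
  shows "prob (A \<inter> E) \<ge> 1 - \<eta>"
proof -
  have "1 - \<eta> = (1 - (\<eta> - \<epsilon>) / (1 - \<epsilon>)) * (1 - \<epsilon>)"
    using \<open>\<epsilon> < 1\<close> by (simp add: field_simps)
  also have "\<dots> \<le> prob A * prob E"
    using prob_A prob_E \<open>\<epsilon> < 1\<close> by (simp add: mult_right_mono)
  also have "\<dots> = prob (A \<inter> E)"
    using indep by (simp add: indep_event_prob_Int)
  finally show ?thesis .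
qed

lemma confidence_rescaled_bounds:
  fixes \<epsilon> \<eta> :: real
  assumes "0 \<le> \<epsilon>" "\<epsilon> < \<eta>" "\<eta> < 1"
  shows "0 < (\<eta> - \<epsilon>) / (1 - \<epsilon>)" "(\<eta> - \<epsilon>) / (1 - \<epsilon>) < 1"
  using assms by (simp_all add: divide_pos_pos pos_divide_less_eq)

lemma regret_bound_divide:
  "regret_bound C T d N (a / b) =
     C * sqrt (real T * real d * (ln (real N * real T * ln (real T) * b / a)) ^ 3)"
  by (simp only: regret_bound_def divide_divide_eq_right)

theorem theorem7:
  fixes M :: "'a measure"
    and U :: "nat \<Rightarrow> 'a \<Rightarrow> (nat \<Rightarrow> nat \<Rightarrow> real)"
    and f :: "(nat \<Rightarrow> nat \<Rightarrow> real) \<Rightarrow> real"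
    and \<delta> :: real and T N d :: nat
    and R :: "'a \<Rightarrow> real" \<comment> \<open>the T-regret of the bandit algorithm\<close>
    and C \<epsilon> \<eta> :: real
  assumes "prob_space M"
    and E_ev: "space M \<inter> reach_target U f \<delta> T \<in> sets M"
    and eps: "\<epsilon> = 1 - measure M (space M \<inter> reach_target U f \<delta> T)"
    and C_pos: "C > 0"
    and regret: "\<And>\<eta>1. 0 < \<eta>1 \<Longrightarrow> \<eta>1 < 1 \<Longrightarrow>
        {w \<in> space M. R w \<le> regret_bound C T d N \<eta>1} \<in> sets M \<and>
        measure M {w \<in> space M. R w \<le> regret_bound C T d N \<eta>1} \<ge> 1 - \<eta>1 \<and>
        prob_space.indep_event M {w \<in> space M. R w \<le> regret_bound C T d N \<eta>1}
                                 (space M \<inter> reach_target U f \<delta> T)"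
    and eta: "\<epsilon> < \<eta>" "\<eta> < 1"
  shows "measure M {w \<in> space M. w \<in> reach_target U f \<delta> T \<and>
            R w \<le> C * sqrt (real T * real d *
              (ln (real N * real T * ln (real T) * (1 - \<epsilon>) / (\<eta> - \<epsilon>))) ^ 3)}
         \<ge> 1 - \<eta>"
proof -
  interpret prob_space M by fact
  define E where "E = space M \<inter> reach_target U f \<delta> T"
  define \<eta>1 where "\<eta>1 = (\<eta> - \<epsilon>) / (1 - \<epsilon>)"
  define A where "A = {w \<in> space M. R w \<le> regret_bound C T d N \<eta>1}"
  have prob_E: "prob E = 1 - \<epsilon>"
    using eps by (simp add: E_def)
  have "0 \<le> \<epsilon>"
    using prob_E prob_le_1[of E] by simp
  then have "0 < \<eta>1" "\<eta>1 < 1"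
    using eta confidence_rescaled_bounds unfolding \<eta>1_def by blast+
  then have "prob A \<ge> 1 - \<eta>1" "indep_event A E"
    using regret by (simp_all add: A_def E_def)
  then have "prob (A \<inter> E) \<ge> 1 - \<eta>"
    using indep_event_prob_Int_ge prob_E eta by (simp add: \<eta>1_def)
  moreover have "A \<inter> E = {w \<in> space M. w \<in> reach_target U f \<delta> T \<and>
            R w \<le> C * sqrt (real T * real d *
              (ln (real N * real T * ln (real T) * (1 - \<epsilon>) / (\<eta> - \<epsilon>))) ^ 3)}"
    unfolding A_def E_def \<eta>1_def regret_bound_divide by blast
  ultimately show ?thesis
    by simp
qed

end
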